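(* Let $V=(J,(V_j)_{j\in J},d,H)$ be a hypergraph system and let $(\nu_e)_{e\in H}$ be a pseudorandom system of measures on $V$. For every $e\in H$ let $f_e:V_e\to\mathbb{R}$ satisfy $|f_e(x_e)|\le\nu_e(x_e)$ for all $x_e\in V_e$. Then $$\mathbb{E}\Big(\prod_{e\in H}f_e(\pi_e(x))\ \Big|\ x\in V_J\Big)=O\Big(\inf_{e\in H}\|f_e\|_{\Box^e}\Big)+o_{N\to\infty}(1),$$ where the implicit constants depend only on $J$ and the pseudorandomness constants (not on the functions $f_e$).
   Context: A hypergraph system is a quadruple $V=(J,(V_j)_{j\in J},d,H)$ where $J$ is a finite set, each $V_j$ is a finite nonempty set, $d\ge1$ is an integer and $H\subseteq\binom{J}{d}:=\{e\subseteq J:|e|=d\}$. For $e\subseteq J$ put $V_e:=\prod_{j\in e}V_j$ and let $\pi_e:V_J\to V_e$ be the coordinate projection. For a finite nonempty set $Z$ and $f:Z\to\mathbb{R}$, $\mathbb{E}(f(x)\mid x\in Z):=|Z|^{-1}\sum_{x\in Z}f(x)$; constraints written after the bar mean uniform averaging over all tuples satisfying them. All objects depend on a parameter $N$ ranging over a sequence tending to infinity while $J,d,H$ are fixed; implicit constants may depend on $J$. $o_{x\to0;y}(X)$ denotes a quantity bounded in magnitude by $c(x,y)X$ where $c(x,y)\to0$ as $x\to0$ for each fixed $y$; $O_y(X)$ a quantity bounded by $C(y)X$. Cube notation: for a finite set $e$, $\{0,1\}^e$ is the set of tuples $\omega=(\omega_j)_{j\in e}$ with $\omega_j\in\{0,1\}$,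 and $0^e$ is the all-zero tuple; for $x^{(0)}_J,x^{(1)}_J\in V_J$, $e\subseteq J$ and $\omega\in\{0,1\}^e$, set $x^{(\omega)}_e:=(x^{(\omega_j)}_j)_{j\in e}\in V_e$ and $x^{(a)}_e:=(x^{(a)}_j)_{j\in e}$ for $a\in\{0,1\}$. The Gowers cube norm of $f:V_e\to\mathbb{R}$ is $\|f\|_{\Box^e}:=\mathbb{E}\big(\prod_{\omega\in\{0,1\}^e}f(x^{(\omega)}_e)\mid x^{(0)}_e,x^{(1)}_e\in V_e\big)^{1/2^{|e|}}$. A system of measures is a family of functions $\nu_e:V_e\to[0,\infty)$, $e\in H$, with $\mathbb{E}(\nu_e(x_e)\mid x_e\in V_e)=1+o_{N\to\infty}(1)$. For $e\in H$ and $f:V_e\to\mathbb{R}$, $\mathcal{D}_ef(x^{(0)}_e):=\mathbb{E}\big(\prod_{\omega\in\{0,1\}^e,\ \omega\neq 0^e}f(x^{(\omega)}_e)\mid x^{(1)}_e\in V_e\big)$. The system is pseudorandom if: (i) $\mathcal{D}_e(\nu_e+1)(x_e)=O(1)$ for all $e\in H$, $x_e\in V_e$; (ii) for every choice of exponents $n_{e,\omega}\in\{0,1\}$, $\mathbb{E}\big(\prod_{e\in H}\prod_{\omega\in\{0,1\}^e}\nu_e(x^{(\omega)}_e)^{n_{e,\omega}}\mid x^{(0)}_J,x^{(1)}_J\in V_J\big)=1+o_{N\to\infty}(1)$; (iii) for every $e\in H$, $j\in e$, every choice of $n_{e,\omega}\in\{0,1\}$ and every integer $K\ge0$, $\mathbb{E}\Big(\mathbb{E}\big(\prod_{\omega\in\{0,1\}^e}\nu_e(x^{(\omega)}_e)^{n_{e,\omega}}\mid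 x^{(0)}_j,x^{(1)}_j\in V_j\big)^K\ \Big|\ x^{(0)}_{e\setminus\{j\}},x^{(1)}_{e\setminus\{j\}}\in V_{e\setminus\{j\}}\Big)=O_K(1)$. *)

theory Defs
  imports "HOL-Analysis.Analysis"
begin

definition avg :: "'a set \<Rightarrow> ('a \<Rightarrow> real) \<Rightarrow> real" where
  "avg A g = (\<Sum>x\<in>A. g x) / real (card A)"

definition Vprod :: "('j \<Rightarrow> 'v set) \<Rightarrow> 'j set \<Rightarrow> ('j \<Rightarrow> 'v) set" where
  "Vprod V e = PiE e V"

definition proj :: "'j set \<Rightarrow> ('j \<Rightarrow> 'v) \<Rightarrow> ('j \<Rightarrow> 'v)" where
  "proj e x = restrict x e"

text \<open>The cube {0,1}^e; omega j = True means omega_j = 1.\<close>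
definition cube :: "'j set \<Rightarrow> ('j \<Rightarrow> bool) set" where
  "cube e = PiE e (\<lambda>_. UNIV)"

definition cpt :: "'j set \<Rightarrow> ('j \<Rightarrow> bool) \<Rightarrow> ('j \<Rightarrow> 'v) \<Rightarrow> ('j \<Rightarrow> 'v) \<Rightarrow> ('j \<Rightarrow> 'v)" where
  "cpt e \<omega> x0 x1 = (\<lambda>j\<in>e. if \<omega> j then x1 j else x0 j)"

definition cube_norm :: "('j \<Rightarrow> 'v set) \<Rightarrow> 'j set \<Rightarrow> (('j \<Rightarrow> 'v) \<Rightarrow> real) \<Rightarrow> real" where
  "cube_norm V e f = root (2 ^ card e)
     (avg (Vprod V e \<times> Vprod V e) (\<lambda>(x0, x1). \<Prod>\<omega>\<in>cube e. f (cpt e \<omega> x0 x1)))"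

definition Dop :: "('j \<Rightarrow> 'v set) \<Rightarrow> 'j set \<Rightarrow> (('j \<Rightarrow> 'v) \<Rightarrow> real) \<Rightarrow> ('j \<Rightarrow> 'v) \<Rightarrow> real" where
  "Dop V e f x0 = avg (Vprod V e)
     (\<lambda>x1. \<Prod>\<omega>\<in>cube e - {(\<lambda>j\<in>e. False)}. f (cpt e \<omega> x0 x1))"

text \<open>Hypergraph system (J, (V_j), d, H); here V depends on the parameter N while J, d, H are fixed.\<close>
definition hypergraph_system :: "'j set \<Rightarrow> (nat \<Rightarrow> 'j \<Rightarrow> 'v set) \<Rightarrow> nat \<Rightarrow> 'j set set \<Rightarrow> bool" where
  "hypergraph_system J V d H \<longleftrightarrow> finite J \<and> d \<ge> 1 \<and> H \<subseteq> {e. e \<subseteq> J \<and> card e = d} \<and>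
     (\<forall>N. \<forall>j\<in>J. finite (V N j) \<and> V N j \<noteq> {})"

definition system_of_measures ::
  "'j set \<Rightarrow> (nat \<Rightarrow> 'j \<Rightarrow> 'v set) \<Rightarrow> 'j set set \<Rightarrow> (nat \<Rightarrow> 'j set \<Rightarrow> ('j \<Rightarrow> 'v) \<Rightarrow> real) \<Rightarrow> bool" where
  "system_of_measures J V H \<nu> \<longleftrightarrow>
     (\<forall>N. \<forall>e\<in>H. \<forall>x\<in>Vprod (V N) e. \<nu> N e x \<ge> 0) \<and>
     (\<forall>e\<in>H. (\<lambda>N. avg (Vprod (V N) e) (\<nu> N e)) \<longlonglongrightarrow> 1)"

text \<open>Pseudorandomness conditions (i)-(iii). O(1) means bounded by a constant for all large N.
  Exponents n_{e,omega} in {0,1} are given by a function n with values in {0,1}.\<close>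
definition pseudorandom ::
  "'j set \<Rightarrow> (nat \<Rightarrow> 'j \<Rightarrow> 'v set) \<Rightarrow> 'j set set \<Rightarrow> (nat \<Rightarrow> 'j set \<Rightarrow> ('j \<Rightarrow> 'v) \<Rightarrow> real) \<Rightarrow> bool" where
  "pseudorandom J V H \<nu> \<longleftrightarrow>
     system_of_measures J V H \<nu> \<and>
     \<comment> \<open>(i)\<close>
     (\<exists>C. \<forall>\<^sub>F N in sequentially. \<forall>e\<in>H. \<forall>x\<in>Vprod (V N) e.
          \<bar>Dop (V N) e (\<lambda>y. \<nu> N e y + 1) x\<bar> \<le> C) \<and>
     \<comment> \<open>(ii)\<close>
     (\<forall>n :: 'j set \<Rightarrow> ('j \<Rightarrow> bool) \<Rightarrow> nat. (\<forall>e \<omega>. n e \<omega> \<le> 1) \<longrightarrow>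
        (\<lambda>N. avg (Vprod (V N) J \<times> Vprod (V N) J)
           (\<lambda>(x0, x1). \<Prod>e\<in>H. \<Prod>\<omega>\<in>cube e. \<nu> N e (cpt e \<omega> x0 x1) ^ n e \<omega>)) \<longlonglongrightarrow> 1) \<and>
     \<comment> \<open>(iii)\<close>
     (\<forall>e\<in>H. \<forall>j\<in>e. \<forall>n :: ('j \<Rightarrow> bool) \<Rightarrow> nat. (\<forall>\<omega>. n \<omega> \<le> 1) \<longrightarrow> (\<forall>K::nat.
        (\<exists>C. \<forall>\<^sub>F N in sequentially.
           \<bar>avg (Vprod (V N) (e - {j}) \<times> Vprod (V N) (e - {j}))
             (\<lambda>(x0, x1). (avg (V N j \<times> V N j)
                (\<lambda>(a0, a1). \<Prod>\<omega>\<in>cube e. \<nu> N e (cpt e \<omega> (x0(j := a0)) (x1(j := a1))) ^ n \<omega>)) ^ K)\<bar>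
           \<le> C)))"

end

theory Submission
  imports Defs
begin

(* Fix an edge e0 and write the average of prod_e f_e(pi_e x) as an average over pairs
   (x^(0), x^(1)).  Applying the Cauchy-Schwarz inequality once for each coordinate j of e0
   doubles that coordinate; the factors of the edges not containing j, bounded by their
   majorants nu_e, serve as weights.  After the d steps, the 2^d-th power of the average is bounded, up to
   factors tending to 1 by condition (ii), by the average of prod_{omega in {0,1}^e0}
   f_e0(x^(omega)) times nu-weights from the other edges: no other edge contains e0, as all edges
   have d elements.  A last Cauchy-Schwarz step in the coordinates J - e0 removes these weights at
   the cost of an error that condition (ii) again sends to 0, leaving ||f_e0||^(2^d). *)

definition pair_avg :: "'a set \<Rightarrow> ('a \<Rightarrow> 'a \<Rightarrow> real) \<Rightarrow> real" where
  "pair_avg X g = avg (X \<times> X) (\<lambda>(x0, x1). g x0 x1)"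

lemma avg_cong: "(\<And>x. x \<in> A \<Longrightarrow> f x = g x) \<Longrightarrow> avg A f = avg A g"
  unfolding avg_def by (metis sum.cong)

lemma avg_nonneg: "(\<And>x. x \<in> A \<Longrightarrow> 0 \<le> g x) \<Longrightarrow> 0 \<le> avg A g"
  unfolding avg_def by (intro divide_nonneg_nonneg sum_nonneg) auto

lemma avg_mult_left: "avg A (\<lambda>x. c * g x) = c * avg A g"
  unfolding avg_def by (simp add: sum_distrib_left)

lemma avg_Times:
  assumes "finite A" "finite B"
  shows "avg (A \<times> B) (\<lambda>(a, b). g a b) = avg A (\<lambda>a. avg B (g a))"
  unfolding avg_def using assms
  by (simp add: sum.cartesian_product[symmetric] card_cartesian_product sum_divide_distrib[symmetric])

lemma pair_avg_eq_double_sum: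
  "pair_avg X g = (\<Sum>x0\<in>X. \<Sum>x1\<in>X. g x0 x1) / (real (card X))\<^sup>2"
  unfolding pair_avg_def avg_def
  by (simp add: sum.cartesian_product card_cartesian_product power2_eq_square)

lemma pair_avg_nonneg:
  "(\<And>x0 x1. x0 \<in> X \<Longrightarrow> x1 \<in> X \<Longrightarrow> 0 \<le> g x0 x1) \<Longrightarrow> 0 \<le> pair_avg X g"
  unfolding pair_avg_def by (rule avg_nonneg) auto

lemma pair_avg_add: "pair_avg X (\<lambda>x0 x1. f x0 x1 + g x0 x1) = pair_avg X f + pair_avg X g"
  unfolding pair_avg_def avg_def by (simp add: case_prod_beta sum.distrib add_divide_distrib)

lemma pair_avg_diff: "pair_avg X (\<lambda>x0 x1. f x0 x1 - g x0 x1) = pair_avg X f - pair_avg X g"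
  unfolding pair_avg_def avg_def by (simp add: case_prod_beta sum_subtractf diff_divide_distrib)

lemma pair_avg_left:
  assumes "finite X" "X \<noteq> {}"
  shows "pair_avg X (\<lambda>x0 x1. g x0) = avg X g"
  using assms by (simp add: pair_avg_def avg_Times) (simp add: avg_def)

lemma pair_avg_square_le_of_double_sums:
  assumes "(\<Sum>x0\<in>X. \<Sum>x1\<in>X. a x0 x1)\<^sup>2 \<le> (\<Sum>x0\<in>X. \<Sum>x1\<in>X. w x0 x1) * (\<Sum>x0\<in>X. \<Sum>x1\<in>X. t x0 x1)"
  shows "(pair_avg X a)\<^sup>2 \<le> pair_avg X w * pair_avg X t"
  using divide_right_mono[OF assms, of "(real (card X))\<^sup>2 * (real (card X))\<^sup>2"]
  by (simp add: pair_avg_eq_double_sum power_divide power_mult_distrib)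

lemma weighted_Cauchy_Schwarz:
  fixes a b w :: "'a \<Rightarrow> real"
  assumes "\<And>p. p \<in> P \<Longrightarrow> \<bar>a p\<bar> \<le> w p"
  shows "(\<Sum>p\<in>P. a p * b p)\<^sup>2 \<le> (\<Sum>p\<in>P. w p) * (\<Sum>p\<in>P. w p * (b p)\<^sup>2)"
proof -
  have w_nonneg: "\<And>p. p \<in> P \<Longrightarrow> 0 \<le> w p" using assms by (meson abs_ge_zero order_trans)
  have "\<bar>\<Sum>p\<in>P. a p * b p\<bar> \<le> (\<Sum>p\<in>P. sqrt (w p) * (sqrt (w p) * \<bar>b p\<bar>))"
  proof (rule order_trans[OF sum_abs sum_mono])
    fix p assume "p \<in> P"
    then show "\<bar>a p * b p\<bar> \<le> sqrt (w p) * (sqrt (w p) * \<bar>b p\<bar>)"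
      using assms w_nonneg by (simp add: abs_mult mult_right_mono mult.assoc[symmetric])
  qed
  then have "(\<Sum>p\<in>P. a p * b p)\<^sup>2 \<le> (\<Sum>p\<in>P. sqrt (w p) * (sqrt (w p) * \<bar>b p\<bar>))\<^sup>2"
    by (metis abs_ge_zero power2_abs power_mono)
  also have "\<dots> \<le> (\<Sum>p\<in>P. (sqrt (w p))\<^sup>2) * (\<Sum>p\<in>P. (sqrt (w p) * \<bar>b p\<bar>)\<^sup>2)"
    by (rule Cauchy_Schwarz_ineq_sum)
  also have "\<dots> = (\<Sum>p\<in>P. w p) * (\<Sum>p\<in>P. w p * (b p)\<^sup>2)"
    using w_nonneg by (intro arg_cong2[where f="(*)"] sum.cong) (auto simp: power_mult_distrib)
  finally show ?thesis .
qed

section \<open>Resampling coordinates of a finite product\<close>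

lemma override_on_in_PiE:
  "x \<in> PiE J V \<Longrightarrow> z \<in> PiE T V \<Longrightarrow> T \<subseteq> J \<Longrightarrow> override_on x z T \<in> PiE J V"
  unfolding override_on_def PiE_iff extensional_def by auto

lemma override_on_override_on [simp]:
  "override_on (override_on a b T) c T = override_on a c T"
  unfolding override_on_def by auto

lemma override_on_left_override_on [simp]:
  "override_on a (override_on c d T) T = override_on a d T"
  unfolding override_on_def by auto

lemma restrict_override_on [simp]: "restrict (override_on x z T) T = restrict z T"
  unfolding override_on_def by auto

locale finite_grid =
  fixes J :: "'j set" and V :: "'j \<Rightarrow> 'v set"
  assumes finite_J: "finite J"
    and finite_V: "\<And>i. i \<in> J \<Longrightarrow> finite (V i)"
    and V_nonempty: "\<And>i. i \<in> J \<Longrightarrow> V i \<noteq> {}"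
begin

lemma finite_PiE_subset: "T \<subseteq> J \<Longrightarrow> finite (PiE T V)"
  using finite_J finite_V by (intro finite_PiE) (auto intro: finite_subset)

lemma card_PiE_subset_pos: "T \<subseteq> J \<Longrightarrow> 0 < card (PiE T V)"
  using finite_PiE_subset V_nonempty by (auto simp: card_gt_0_iff PiE_eq_empty_iff)

text \<open>\<open>(x, z) \<mapsto> (x overridden by z on T, x restricted to T)\<close> is an involution of \<open>V\<^sub>J \<times> V\<^sub>T\<close>.\<close>
lemma sum_PiE_override_on:
  assumes T: "T \<subseteq> J"
  shows "(\<Sum>x\<in>PiE J V. h x) = (\<Sum>x\<in>PiE J V. avg (PiE T V) (\<lambda>z. h (override_on x z T)))"
proof -
  let ?X = "PiE J V" and ?Z = "PiE T V"
  define \<phi> where "\<phi> = (\<lambda>(x :: 'j \<Rightarrow> 'v, z :: 'j \<Rightarrow> 'v). (override_on x z T, restrict x T))"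
  have involution: "\<phi> (\<phi> p) = p" if "p \<in> ?X \<times> ?Z" for p
    using that by (auto simp: \<phi>_def override_on_def PiE_iff extensional_def fun_eq_iff)
  have "\<phi> ` (?X \<times> ?Z) \<subseteq> ?X \<times> ?Z"
    using T by (auto simp: \<phi>_def override_on_def PiE_iff extensional_def)
  then have bij: "bij_betw \<phi> (?X \<times> ?Z) (?X \<times> ?Z)"
    using involution by (intro bij_betw_byWitness[where f'=\<phi>]) auto
  have "(\<Sum>x\<in>?X. \<Sum>z\<in>?Z. h (override_on x z T)) = (\<Sum>p\<in>?X \<times> ?Z. (\<lambda>(y, u). h y) (\<phi> p))"
    by (simp add: sum.cartesian_product \<phi>_def case_prod_beta)
  also have "\<dots> = (\<Sum>p\<in>?X \<times> ?Z. (\<lambda>(y, u). h y) p)"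
    by (rule sum.reindex_bij_betw[OF bij])
  also have "\<dots> = real (card ?Z) * (\<Sum>x\<in>?X. h x)"
    by (simp add: sum.cartesian_product[symmetric] sum_distrib_left)
  finally show ?thesis
    using card_PiE_subset_pos[OF T] by (simp add: avg_def sum_divide_distrib[symmetric])
qed

lemma sum_PiE_override_on_factor:
  assumes T: "T \<subseteq> J"
    and a_inv: "\<And>x z. x \<in> PiE J V \<Longrightarrow> z \<in> PiE T V \<Longrightarrow> a (override_on x z T) = a x"
  shows "(\<Sum>x\<in>PiE J V. a x * b x) = (\<Sum>x\<in>PiE J V. a x * avg (PiE T V) (\<lambda>z. b (override_on x z T)))"
  unfolding sum_PiE_override_on[OF T, of "\<lambda>x. a x * b x"]
proof (rule sum.cong[OF refl])
  fix x assume "x \<in> PiE J V"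
  then have "avg (PiE T V) (\<lambda>z. a (override_on x z T) * b (override_on x z T))
      = avg (PiE T V) (\<lambda>z. a x * b (override_on x z T))"
    using a_inv by (intro avg_cong) auto
  then show "avg (PiE T V) (\<lambda>z. a (override_on x z T) * b (override_on x z T))
      = a x * avg (PiE T V) (\<lambda>z. b (override_on x z T))"
    by (simp add: avg_mult_left)
qed

lemma avg_PiE_restrict:
  assumes e: "e \<subseteq> J"
  shows "avg (PiE J V) (\<lambda>x. g (restrict x e)) = avg (PiE e V) g"
proof -
  have "avg (PiE e V) (\<lambda>z. g (restrict (override_on x z e) e)) = avg (PiE e V) g" for x
    by (intro avg_cong) simp
  then have "(\<Sum>x\<in>PiE J V. g (restrict x e)) = real (card (PiE J V)) * avg (PiE e V) g"
    unfolding sum_PiE_override_on[OF e, of "\<lambda>x. g (restrict x e)"] by simp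
  then show ?thesis
    using card_PiE_subset_pos[of J] by (simp add: avg_def)
qed

lemma pair_avg_PiE_restrict:
  assumes e: "e \<subseteq> J"
  shows "pair_avg (PiE J V) (\<lambda>x0 x1. h (restrict x0 e) (restrict x1 e)) = pair_avg (PiE e V) h"
proof -
  have "avg (PiE J V) (\<lambda>x1. h a (restrict x1 e)) = avg (PiE e V) (h a)" for a
    using avg_PiE_restrict[OF e, of "h a"] .
  moreover have "avg (PiE J V) (\<lambda>x0. avg (PiE e V) (h (restrict x0 e)))
      = avg (PiE e V) (\<lambda>a. avg (PiE e V) (h a))"
    using avg_PiE_restrict[OF e, of "\<lambda>a. avg (PiE e V) (h a)"] .
  ultimately show ?thesis
    using finite_PiE_subset[of J] finite_PiE_subset[OF e] by (simp add: pair_avg_def avg_Times)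
qed

lemma double_sum_override_on_avg:
  assumes T: "T \<subseteq> J"
    and A_inv: "\<And>x0 x1 z. x0 \<in> PiE J V \<Longrightarrow> x1 \<in> PiE J V \<Longrightarrow> z \<in> PiE T V \<Longrightarrow>
      A (override_on x0 z T) x1 = A x0 x1"
  shows "(\<Sum>x0\<in>PiE J V. \<Sum>x1\<in>PiE J V. A x0 x1 * B x0 x1)
    = (\<Sum>x0\<in>PiE J V. \<Sum>x1\<in>PiE J V. A x0 x1 * avg (PiE T V) (\<lambda>z. B (override_on x0 z T) x1))"
proof -
  have inner: "(\<Sum>x0\<in>PiE J V. A x0 x1 * B x0 x1)
      = (\<Sum>x0\<in>PiE J V. A x0 x1 * avg (PiE T V) (\<lambda>z. B (override_on x0 z T) x1))"
    if "x1 \<in> PiE J V" for x1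
    using that A_inv by (intro sum_PiE_override_on_factor[OF T]) auto
  have "(\<Sum>x0\<in>PiE J V. \<Sum>x1\<in>PiE J V. A x0 x1 * B x0 x1) = (\<Sum>x1\<in>PiE J V. \<Sum>x0\<in>PiE J V. A x0 x1 * B x0 x1)"
    by (rule sum.swap)
  also have "\<dots> = (\<Sum>x1\<in>PiE J V. \<Sum>x0\<in>PiE J V. A x0 x1 * avg (PiE T V) (\<lambda>z. B (override_on x0 z T) x1))"
    by (rule sum.cong[OF refl]) (rule inner)
  also have "\<dots> = (\<Sum>x0\<in>PiE J V. \<Sum>x1\<in>PiE J V. A x0 x1 * avg (PiE T V) (\<lambda>z. B (override_on x0 z T) x1))"
    by (rule sum.swap)
  finally show ?thesis .
qed

lemma double_sum_override_on_square:
  fixes W B :: "('j \<Rightarrow> 'v) \<Rightarrow> ('j \<Rightarrow> 'v) \<Rightarrow> real" and T :: "'j set"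
  defines "M \<equiv> \<lambda>x0 x1. avg (PiE T V) (\<lambda>z. B (override_on x0 z T) x1)"
  assumes T: "T \<subseteq> J"
    and W_inv: "\<And>x0 x1 z. x0 \<in> PiE J V \<Longrightarrow> x1 \<in> PiE J V \<Longrightarrow> z \<in> PiE T V \<Longrightarrow>
      W (override_on x0 z T) x1 = W x0 x1 \<and> W x0 (override_on x1 z T) = W x0 x1"
    and B_inv: "\<And>x0 x1 z. x0 \<in> PiE J V \<Longrightarrow> x1 \<in> PiE J V \<Longrightarrow> z \<in> PiE T V \<Longrightarrow>
      B x0 (override_on x1 z T) = B x0 x1"
  shows "(\<Sum>x0\<in>PiE J V. \<Sum>x1\<in>PiE J V. W x0 x1 * B x0 x1 * B (override_on x0 x1 T) x1)
    = (\<Sum>x0\<in>PiE J V. \<Sum>x1\<in>PiE J V. W x0 x1 * M x0 x1 * M x0 x1)"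
proof -
  let ?X = "PiE J V"
  have first: "(\<Sum>x1\<in>?X. (W x0 x1 * B x0 x1) * B (override_on x0 x1 T) x1)
      = (\<Sum>x1\<in>?X. (W x0 x1 * B x0 x1) * M x0 x1)" if x0: "x0 \<in> ?X" for x0
  proof -
    have "avg (PiE T V) (\<lambda>z. B (override_on x0 (override_on x1 z T) T) (override_on x1 z T)) = M x0 x1"
      if "x1 \<in> ?X" for x1
      unfolding M_def using x0 that T by (intro avg_cong) (simp add: B_inv override_on_in_PiE)
    then show ?thesis
      using x0 W_inv B_inv by (subst sum_PiE_override_on_factor[OF T]) auto
  qed
  have second: "(\<Sum>x0\<in>?X. (W x0 x1 * M x0 x1) * B x0 x1) = (\<Sum>x0\<in>?X. (W x0 x1 * M x0 x1) * M x0 x1)"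
    if "x1 \<in> ?X" for x1
    using that W_inv by (subst sum_PiE_override_on_factor[OF T]) (auto simp: M_def)
  have "(\<Sum>x0\<in>?X. \<Sum>x1\<in>?X. W x0 x1 * B x0 x1 * B (override_on x0 x1 T) x1)
      = (\<Sum>x0\<in>?X. \<Sum>x1\<in>?X. W x0 x1 * B x0 x1 * M x0 x1)"
    by (rule sum.cong[OF refl]) (rule first)
  also have "\<dots> = (\<Sum>x1\<in>?X. \<Sum>x0\<in>?X. (W x0 x1 * M x0 x1) * B x0 x1)"
    by (subst sum.swap) (simp add: mult_ac)
  also have "\<dots> = (\<Sum>x1\<in>?X. \<Sum>x0\<in>?X. W x0 x1 * M x0 x1 * M x0 x1)"
    by (rule sum.cong[OF refl]) (rule second)
  also have "\<dots> = (\<Sum>x0\<in>?X. \<Sum>x1\<in>?X. W x0 x1 * M x0 x1 * M x0 x1)"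
    by (rule sum.swap)
  finally show ?thesis .
qed

text \<open>Since \<open>A\<close> and the weight \<open>W\<close> do not see the coordinates in \<open>T\<close>, \<open>B\<close> may be replaced by its
  average over them, and the square of that average unfolds into \<open>B\<close> times a copy of \<open>B\<close> whose
  \<open>T\<close>-coordinates are taken from the other point.\<close>
lemma Cauchy_Schwarz_override_on:
  fixes A W B :: "('j \<Rightarrow> 'v) \<Rightarrow> ('j \<Rightarrow> 'v) \<Rightarrow> real"
  defines "X \<equiv> PiE J V"
  assumes T: "T \<subseteq> J"
    and A_inv: "\<And>x0 x1 z. x0 \<in> X \<Longrightarrow> x1 \<in> X \<Longrightarrow> z \<in> PiE T V \<Longrightarrow> A (override_on x0 z T) x1 = A x0 x1"
    and W_inv: "\<And>x0 x1 z. x0 \<in> X \<Longrightarrow> x1 \<in> X \<Longrightarrow> z \<in> PiE T V \<Longrightarrow>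
        W (override_on x0 z T) x1 = W x0 x1 \<and> W x0 (override_on x1 z T) = W x0 x1"
    and B_inv: "\<And>x0 x1 z. x0 \<in> X \<Longrightarrow> x1 \<in> X \<Longrightarrow> z \<in> PiE T V \<Longrightarrow> B x0 (override_on x1 z T) = B x0 x1"
    and A_le_W: "\<And>x0 x1. x0 \<in> X \<Longrightarrow> x1 \<in> X \<Longrightarrow> \<bar>A x0 x1\<bar> \<le> W x0 x1"
  shows "(pair_avg X (\<lambda>x0 x1. A x0 x1 * B x0 x1))\<^sup>2
      \<le> pair_avg X W * pair_avg X (\<lambda>x0 x1. W x0 x1 * B x0 x1 * B (override_on x0 x1 T) x1)"
    and "0 \<le> pair_avg X (\<lambda>x0 x1. W x0 x1 * B x0 x1 * B (override_on x0 x1 T) x1)"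
proof -
  define M where "M x0 x1 = avg (PiE T V) (\<lambda>z. B (override_on x0 z T) x1)" for x0 x1
  have AM: "(\<Sum>x0\<in>X. \<Sum>x1\<in>X. A x0 x1 * B x0 x1) = (\<Sum>x0\<in>X. \<Sum>x1\<in>X. A x0 x1 * M x0 x1)"
    unfolding X_def M_def using A_inv X_def by (intro double_sum_override_on_avg[OF T]) auto
  have WMM: "(\<Sum>x0\<in>X. \<Sum>x1\<in>X. W x0 x1 * B x0 x1 * B (override_on x0 x1 T) x1)
      = (\<Sum>x0\<in>X. \<Sum>x1\<in>X. W x0 x1 * M x0 x1 * M x0 x1)"
    unfolding X_def M_def using W_inv B_inv X_def by (intro double_sum_override_on_square[OF T]) auto
  have pairs: "(\<Sum>p\<in>X \<times> X. g (fst p) (snd p)) = (\<Sum>x0\<in>X. \<Sum>x1\<in>X. g x0 x1)"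
    for g :: "('j \<Rightarrow> 'v) \<Rightarrow> ('j \<Rightarrow> 'v) \<Rightarrow> real"
    by (simp add: sum.cartesian_product case_prod_beta)
  have "(\<Sum>p\<in>X \<times> X. A (fst p) (snd p) * M (fst p) (snd p))\<^sup>2
      \<le> (\<Sum>p\<in>X \<times> X. W (fst p) (snd p)) * (\<Sum>p\<in>X \<times> X. W (fst p) (snd p) * (M (fst p) (snd p))\<^sup>2)"
    using A_le_W by (intro weighted_Cauchy_Schwarz) auto
  then have "(\<Sum>x0\<in>X. \<Sum>x1\<in>X. A x0 x1 * B x0 x1)\<^sup>2
      \<le> (\<Sum>x0\<in>X. \<Sum>x1\<in>X. W x0 x1) * (\<Sum>x0\<in>X. \<Sum>x1\<in>X. W x0 x1 * B x0 x1 * B (override_on x0 x1 T) x1)"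
    unfolding AM WMM
    using pairs[of "\<lambda>x0 x1. A x0 x1 * M x0 x1"] pairs[of W] pairs[of "\<lambda>x0 x1. W x0 x1 * (M x0 x1)\<^sup>2"]
    by (simp add: power2_eq_square mult.assoc)
  then show "(pair_avg X (\<lambda>x0 x1. A x0 x1 * B x0 x1))\<^sup>2
      \<le> pair_avg X W * pair_avg X (\<lambda>x0 x1. W x0 x1 * B x0 x1 * B (override_on x0 x1 T) x1)"
    by (rule pair_avg_square_le_of_double_sums)
  have "0 \<le> W x0 x1 * M x0 x1 * M x0 x1" if "x0 \<in> X" "x1 \<in> X" for x0 x1
    using A_le_W[OF that] by (simp add: mult.assoc)
  then show "0 \<le> pair_avg X (\<lambda>x0 x1. W x0 x1 * B x0 x1 * B (override_on x0 x1 T) x1)"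
    unfolding pair_avg_eq_double_sum WMM by (intro divide_nonneg_nonneg sum_nonneg) auto
qed

end

section \<open>Products over subcubes\<close>

lemma finite_cube: "finite e \<Longrightarrow> finite (cube e)"
  unfolding cube_def by (intro finite_PiE) auto

definition subcube :: "'j set \<Rightarrow> 'j set \<Rightarrow> ('j \<Rightarrow> bool) set" where
  "subcube S e = {\<omega> \<in> cube e. \<forall>i\<in>e. \<omega> i \<longrightarrow> i \<in> S}"

lemma subcube_subset_cube: "subcube S e \<subseteq> cube e"
  unfolding subcube_def by auto

lemma finite_subcube: "finite e \<Longrightarrow> finite (subcube S e)"
  using finite_cube subcube_subset_cube finite_subset by metis

lemma subcube_self [simp]: "subcube e e = cube e"
  unfolding subcube_def cube_def by auto

lemma subcube_empty: "subcube {} e = {restrict (\<lambda>_. False) e}"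
  unfolding subcube_def cube_def by (auto simp: PiE_iff extensional_def fun_eq_iff)

lemma subcube_insert_notin: "j \<notin> e \<Longrightarrow> subcube (insert j S) e = subcube S e"
  unfolding subcube_def by auto

definition raise_coords :: "'j set \<Rightarrow> 'j set \<Rightarrow> ('j \<Rightarrow> bool) \<Rightarrow> ('j \<Rightarrow> bool)" where
  "raise_coords T e \<omega> = restrict (\<lambda>i. \<omega> i \<or> i \<in> T) e"

lemma raise_coords_in_cube: "raise_coords T e \<omega> \<in> cube e"
  unfolding raise_coords_def cube_def by auto

lemma cpt_raise_coords: "cpt e (raise_coords T e \<omega>) x0 x1 = cpt e \<omega> (override_on x0 x1 T) x1"
  unfolding cpt_def raise_coords_def override_on_def by (auto intro!: restrict_ext)

lemma inj_on_raise_coords: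
  assumes "T \<inter> S = {}"
  shows "inj_on (raise_coords T e) (subcube S e)"
proof (rule inj_onI)
  fix a b assume a: "a \<in> subcube S e" and b: "b \<in> subcube S e"
    and eq: "raise_coords T e a = raise_coords T e b"
  show "a = b"
  proof
    fix i
    show "a i = b i"
    proof (cases "i \<in> e")
      case True
      then have "a i \<or> i \<in> T \<longleftrightarrow> b i \<or> i \<in> T"
        using fun_cong[OF eq, of i] by (simp add: raise_coords_def)
      moreover have "i \<in> T \<Longrightarrow> \<not> a i \<and> \<not> b i"
        using a b True assms unfolding subcube_def by auto
      ultimately show ?thesis by blast
    next
      case False
      then show ?thesis
        using a b unfolding subcube_def cube_def by (auto simp: PiE_iff extensional_def)
    qed
  qed
qed

lemma subcube_disjoint_raise_coords:
  assumes "i \<in> e" "i \<in> T" "T \<inter> S = {}"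
  shows "subcube S e \<inter> raise_coords T e ` subcube S e = {}"
  using assms unfolding subcube_def raise_coords_def by auto

lemma subcube_insert:
  assumes j: "j \<in> e" "j \<notin> S"
  shows "subcube (insert j S) e = subcube S e \<union> raise_coords {j} e ` subcube S e"
proof
  show "subcube (insert j S) e \<subseteq> subcube S e \<union> raise_coords {j} e ` subcube S e"
  proof
    fix w assume w: "w \<in> subcube (insert j S) e"
    show "w \<in> subcube S e \<union> raise_coords {j} e ` subcube S e"
    proof (cases "w j")
      case True
      have "w(j := False) \<in> subcube S e"
        using w j unfolding subcube_def cube_def by (auto simp: PiE_iff extensional_def)
      moreover have "raise_coords {j} e (w(j := False)) = w"
        using w j True unfolding subcube_def cube_def raise_coords_def
        by (auto simp: PiE_iff extensional_def fun_eq_iff)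
      ultimately show ?thesis by (metis UnI2 image_eqI)
    next
      case False
      then show ?thesis using w unfolding subcube_def by auto
    qed
  qed
  show "subcube S e \<union> raise_coords {j} e ` subcube S e \<subseteq> subcube (insert j S) e"
    using j unfolding subcube_def raise_coords_def cube_def by auto
qed

lemma prod_subcube_union_raise_coords:
  assumes "finite e" "i \<in> e" "i \<in> T" "T \<inter> S = {}"
  shows "(\<Prod>\<omega>\<in>subcube S e \<union> raise_coords T e ` subcube S e. g (cpt e \<omega> x0 x1))
    = (\<Prod>\<omega>\<in>subcube S e. g (cpt e \<omega> x0 x1)) * (\<Prod>\<omega>\<in>subcube S e. g (cpt e \<omega> (override_on x0 x1 T) x1))"
  using assms
  by (simp add: prod.union_disjoint finite_subcube subcube_disjoint_raise_coords
      prod.reindex inj_on_raise_coords cpt_raise_coords)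

lemma cpt_in_PiE: "x0 \<in> PiE J V \<Longrightarrow> x1 \<in> PiE J V \<Longrightarrow> e \<subseteq> J \<Longrightarrow> cpt e \<omega> x0 x1 \<in> PiE e V"
  unfolding cpt_def by (auto simp: PiE_iff)

lemma cpt_restrict: "cpt e \<omega> (restrict x0 e) (restrict x1 e) = cpt e \<omega> x0 x1"
  unfolding cpt_def by auto

lemma cpt_override_on_left: "T \<inter> e = {} \<Longrightarrow> cpt e \<omega> (override_on x0 z T) x1 = cpt e \<omega> x0 x1"
  unfolding cpt_def override_on_def by (auto intro!: restrict_ext)

lemma cpt_override_on_right:
  "(\<And>i. i \<in> e \<Longrightarrow> \<omega> i \<Longrightarrow> i \<notin> T) \<Longrightarrow> cpt e \<omega> x0 (override_on x1 z T) = cpt e \<omega> x0 x1"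
  unfolding cpt_def override_on_def by (auto intro!: restrict_ext)

definition dominated :: "('j \<Rightarrow> 'v set) \<Rightarrow> 'j set set
    \<Rightarrow> ('j set \<Rightarrow> ('j \<Rightarrow> 'v) \<Rightarrow> real) \<Rightarrow> ('j set \<Rightarrow> ('j \<Rightarrow> 'v) \<Rightarrow> real) \<Rightarrow> bool" where
  "dominated V H \<nu> f \<longleftrightarrow> (\<forall>e\<in>H. \<forall>y\<in>PiE e V. \<bar>f e y\<bar> \<le> \<nu> e y)"

definition cube_product :: "'j set set \<Rightarrow> ('j set \<Rightarrow> ('j \<Rightarrow> bool) set)
    \<Rightarrow> ('j set \<Rightarrow> ('j \<Rightarrow> 'v) \<Rightarrow> real) \<Rightarrow> ('j \<Rightarrow> 'v) \<Rightarrow> ('j \<Rightarrow> 'v) \<Rightarrow> real" where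
  "cube_product H K g x0 x1 = (\<Prod>e\<in>H. \<Prod>\<omega>\<in>K e. g e (cpt e \<omega> x0 x1))"

lemma cube_product_filter_edges:
  "finite H \<Longrightarrow> cube_product {e\<in>H. P e} K g = cube_product H (\<lambda>e. if P e then K e else {}) g"
  unfolding cube_product_def by (auto simp: prod.inter_filter fun_eq_iff intro!: prod.cong)

lemma cube_product_split_edges:
  assumes "finite H"
  shows "cube_product H K g x0 x1 = cube_product {e\<in>H. P e} K g x0 x1 * cube_product {e\<in>H. \<not> P e} K g x0 x1"
proof -
  have "H = {e\<in>H. P e} \<union> {e\<in>H. \<not> P e}" by auto
  then show ?thesis
    unfolding cube_product_def using assms
    by (metis (no_types, lifting) prod.union_inter_neutral Int_iff finite_Un mem_Collect_eq)
qed

lemma cube_product_union: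
  assumes "\<And>e. e \<in> H \<Longrightarrow> finite (K1 e) \<and> finite (K2 e) \<and> K1 e \<inter> K2 e = {}"
  shows "cube_product H (\<lambda>e. K1 e \<union> K2 e) g x0 x1 = cube_product H K1 g x0 x1 * cube_product H K2 g x0 x1"
  unfolding cube_product_def prod.distrib[symmetric]
  using assms by (intro prod.cong refl prod.union_disjoint) auto

lemma cube_product_raise_coords:
  assumes "\<And>e. e \<in> H \<Longrightarrow> inj_on (raise_coords T e) (K e)"
  shows "cube_product H (\<lambda>e. raise_coords T e ` K e) g x0 x1 = cube_product H K g (override_on x0 x1 T) x1"
  unfolding cube_product_def using assms by (simp add: prod.reindex cpt_raise_coords)

lemma cube_product_override_on_left:
  assumes "\<And>e. e \<in> H \<Longrightarrow> K e \<noteq> {} \<Longrightarrow> T \<inter> e = {}"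
  shows "cube_product H K g (override_on x0 z T) x1 = cube_product H K g x0 x1"
  unfolding cube_product_def
proof (rule prod.cong[OF refl])
  fix e assume "e \<in> H"
  then show "(\<Prod>\<omega>\<in>K e. g e (cpt e \<omega> (override_on x0 z T) x1)) = (\<Prod>\<omega>\<in>K e. g e (cpt e \<omega> x0 x1))"
    using assms by (cases "K e = {}") (simp_all add: cpt_override_on_left)
qed

lemma cube_product_override_on_right:
  assumes "\<And>e \<omega> i. e \<in> H \<Longrightarrow> \<omega> \<in> K e \<Longrightarrow> i \<in> e \<Longrightarrow> \<omega> i \<Longrightarrow> i \<notin> T"
  shows "cube_product H K g x0 (override_on x1 z T) = cube_product H K g x0 x1"
  unfolding cube_product_def using assms by (intro prod.cong refl) (simp add: cpt_override_on_right)

lemma cube_product_abs_le: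
  assumes "\<And>e. e \<in> H \<Longrightarrow> e \<subseteq> J" "x0 \<in> PiE J V" "x1 \<in> PiE J V" and "dominated V H \<nu> g"
  shows "\<bar>cube_product H K g x0 x1\<bar> \<le> cube_product H K \<nu> x0 x1"
  unfolding cube_product_def abs_prod
  using assms cpt_in_PiE[OF assms(2,3)] unfolding dominated_def by (intro prod_mono conjI prod_nonneg) auto

lemma cube_product_nonneg:
  assumes "\<And>e. e \<in> H \<Longrightarrow> e \<subseteq> J" "x0 \<in> PiE J V" "x1 \<in> PiE J V"
    and "\<And>e y. e \<in> H \<Longrightarrow> y \<in> PiE e V \<Longrightarrow> 0 \<le> \<nu> e y"
  shows "0 \<le> cube_product H K \<nu> x0 x1"
  using cube_product_abs_le[of H J x0 V x1 \<nu> \<nu> K] assms unfolding dominated_def by force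

text \<open>After Cauchy--Schwarz in the coordinates of \<open>S\<close>, edge \<open>e\<close> carries the copies \<open>x\<^sup>(\<^sup>\<omega>\<^sup>)\<close> with
  \<open>\<omega>\<close> supported in \<open>S\<close>; \<open>f\<^sub>e\<close> survives on the edges containing \<open>S\<close> and has been replaced by its
  majorant \<open>\<nu>\<^sub>e\<close> on the others.\<close>
definition doubled_product :: "'j set set \<Rightarrow> 'j set \<Rightarrow> ('j set \<Rightarrow> ('j \<Rightarrow> 'v) \<Rightarrow> real)
    \<Rightarrow> ('j set \<Rightarrow> ('j \<Rightarrow> 'v) \<Rightarrow> real) \<Rightarrow> ('j \<Rightarrow> 'v) \<Rightarrow> ('j \<Rightarrow> 'v) \<Rightarrow> real" where
  "doubled_product H S f \<nu> = cube_product H (subcube S) (\<lambda>e. if S \<subseteq> e then f e else \<nu> e)"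

lemma doubled_product_empty: "doubled_product H {} f \<nu> = (\<lambda>x0 x1. \<Prod>e\<in>H. f e (proj e x0))"
proof -
  have "cpt e (restrict (\<lambda>_. False) e) x0 x1 = proj e x0" for e :: "'a set" and x0 x1 :: "'a \<Rightarrow> 'b"
    unfolding cpt_def proj_def by auto
  then show ?thesis
    unfolding doubled_product_def cube_product_def subcube_empty by simp
qed

definition edge_cube :: "'j set \<Rightarrow> 'j set \<Rightarrow> ('j \<Rightarrow> bool) set" where
  "edge_cube e0 e = (if e = e0 then cube e else {})"

definition other_subcubes :: "'j set \<Rightarrow> 'j set \<Rightarrow> ('j \<Rightarrow> bool) set" where
  "other_subcubes e0 e = (if e = e0 then {} else subcube e0 e)"

lemma cube_product_edge_cube:
  "e0 \<in> H \<Longrightarrow> finite H \<Longrightarrow> cube_product H (edge_cube e0) g = (\<lambda>x0 x1. \<Prod>\<omega>\<in>cube e0. g e0 (cpt e0 \<omega> x0 x1))"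
  unfolding cube_product_def edge_cube_def by (simp add: prod.remove[of H e0] prod.neutral fun_eq_iff)

section \<open>The Cauchy--Schwarz steps on a fixed product space\<close>

locale grid_hypergraph = finite_grid J V for J :: "'j set" and V :: "'j \<Rightarrow> 'v set" +
  fixes H :: "'j set set"
  assumes edge_subset: "\<And>e. e \<in> H \<Longrightarrow> e \<subseteq> J"
begin

lemma finite_H: "finite H"
  using finite_J edge_subset by (meson Pow_iff finite_Pow_iff finite_subset subsetI)

lemma finite_edge: "e \<in> H \<Longrightarrow> finite e"
  using finite_J edge_subset finite_subset by blast

lemma doubled_product_split:
  fixes f \<nu> :: "'j set \<Rightarrow> ('j \<Rightarrow> 'v) \<Rightarrow> real"
  assumes j: "j \<notin> S"
  defines "G \<equiv> \<lambda>e. if S \<subseteq> e then f e else \<nu> e"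
  defines "B \<equiv> cube_product {e\<in>H. j \<in> e} (subcube S) G"
  shows "doubled_product H S f \<nu> x0 x1 = cube_product {e\<in>H. j \<notin> e} (subcube S) G x0 x1 * B x0 x1"
    and "doubled_product H (insert j S) f \<nu> x0 x1
      = cube_product {e\<in>H. j \<notin> e} (subcube S) \<nu> x0 x1 * (B x0 x1 * B (override_on x0 x1 {j}) x1)"
proof -
  show "doubled_product H S f \<nu> x0 x1 = cube_product {e\<in>H. j \<notin> e} (subcube S) G x0 x1 * B x0 x1"
    unfolding doubled_product_def G_def B_def
    using cube_product_split_edges[OF finite_H, of _ _ x0 x1 "\<lambda>e. j \<notin> e"] by simp
  have outside: "cube_product {e\<in>H. j \<notin> e} (subcube (insert j S)) (\<lambda>e. if insert j S \<subseteq> e then f e else \<nu> e) x0 x1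
      = cube_product {e\<in>H. j \<notin> e} (subcube S) \<nu> x0 x1"
    unfolding cube_product_def by (intro prod.cong refl) (auto simp: subcube_insert_notin)
  have doubled: "(\<Prod>\<omega>\<in>subcube (insert j S) e. G e (cpt e \<omega> x0 x1))
      = (\<Prod>\<omega>\<in>subcube S e. G e (cpt e \<omega> x0 x1) * G e (cpt e \<omega> (override_on x0 x1 {j}) x1))"
    if "e \<in> H" "j \<in> e" for e
    unfolding subcube_insert[OF that(2) j] prod.distrib using that j finite_edge
    by (intro prod_subcube_union_raise_coords) auto
  have inside: "cube_product {e\<in>H. j \<in> e} (subcube (insert j S)) (\<lambda>e. if insert j S \<subseteq> e then f e else \<nu> e) x0 x1
      = B x0 x1 * B (override_on x0 x1 {j}) x1"
    unfolding B_def cube_product_def prod.distrib[symmetric]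
    by (rule prod.cong[OF refl]) (use doubled in \<open>auto simp: G_def\<close>)
  show "doubled_product H (insert j S) f \<nu> x0 x1
      = cube_product {e\<in>H. j \<notin> e} (subcube S) \<nu> x0 x1 * (B x0 x1 * B (override_on x0 x1 {j}) x1)"
    unfolding doubled_product_def
    using cube_product_split_edges[OF finite_H, of "subcube (insert j S)" _ x0 x1 "\<lambda>e. j \<notin> e"] outside inside
    by simp
qed

lemma pair_avg_doubled_product_insert_le:
  assumes j: "j \<in> J" "j \<notin> S" and f_le: "dominated V H \<nu> f"
  shows "(pair_avg (PiE J V) (doubled_product H S f \<nu>))\<^sup>2
      \<le> pair_avg (PiE J V) (cube_product {e\<in>H. j \<notin> e} (subcube S) \<nu>)
        * pair_avg (PiE J V) (doubled_product H (insert j S) f \<nu>)"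
    and "0 \<le> pair_avg (PiE J V) (doubled_product H (insert j S) f \<nu>)"
proof -
  define G where "G = (\<lambda>e. if S \<subseteq> e then f e else \<nu> e)"
  define A where "A = cube_product {e\<in>H. j \<notin> e} (subcube S) G"
  define W where "W = cube_product {e\<in>H. j \<notin> e} (subcube S) \<nu>"
  define B where "B = cube_product {e\<in>H. j \<in> e} (subcube S) G"
  have AB: "doubled_product H S f \<nu> = (\<lambda>x0 x1. A x0 x1 * B x0 x1)"
    using doubled_product_split(1)[OF j(2)] by (simp add: A_def B_def G_def fun_eq_iff)
  have WBB: "doubled_product H (insert j S) f \<nu> = (\<lambda>x0 x1. W x0 x1 * B x0 x1 * B (override_on x0 x1 {j}) x1)"
    using doubled_product_split(2)[OF j(2)] by (simp add: W_def B_def G_def fun_eq_iff mult.assoc)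
  have A_inv: "A (override_on x0 z {j}) x1 = A x0 x1" for x0 x1 z
    unfolding A_def by (rule cube_product_override_on_left) auto
  have W_inv: "W (override_on x0 z {j}) x1 = W x0 x1 \<and> W x0 (override_on x1 z {j}) = W x0 x1" for x0 x1 z
    unfolding W_def by (intro conjI cube_product_override_on_left cube_product_override_on_right) auto
  have B_inv: "B x0 (override_on x1 z {j}) = B x0 x1" for x0 x1 z
    unfolding B_def using j(2) by (intro cube_product_override_on_right) (auto simp: subcube_def)
  have "dominated V {e\<in>H. j \<notin> e} \<nu> G"
    using f_le unfolding dominated_def G_def by (auto intro: order_trans[OF abs_ge_zero])
  then have A_le_W: "\<bar>A x0 x1\<bar> \<le> W x0 x1" if "x0 \<in> PiE J V" "x1 \<in> PiE J V" for x0 x1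
    unfolding A_def W_def using that edge_subset by (intro cube_product_abs_le) auto
  note CS = Cauchy_Schwarz_override_on[of "{j}" A W B]
  show "(pair_avg (PiE J V) (doubled_product H S f \<nu>))\<^sup>2
      \<le> pair_avg (PiE J V) (cube_product {e\<in>H. j \<notin> e} (subcube S) \<nu>)
        * pair_avg (PiE J V) (doubled_product H (insert j S) f \<nu>)"
    unfolding AB WBB W_def[symmetric] using j by (intro CS(1)) (auto simp: A_inv W_inv B_inv A_le_W)
  show "0 \<le> pair_avg (PiE J V) (doubled_product H (insert j S) f \<nu>)"
    unfolding WBB using j by (intro CS(2)) (auto simp: A_inv W_inv B_inv A_le_W)
qed

lemma pow_le_doubled_product_insert:
  assumes j: "j \<in> J" "j \<notin> S" "finite S" and f_le: "dominated V H \<nu> f"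
    and a: "0 \<le> a" "a ^ 2 ^ card S \<le> c * \<bar>pair_avg (PiE J V) (doubled_product H S f \<nu>)\<bar>"
  shows "a ^ 2 ^ card (insert j S) \<le> c\<^sup>2 * pair_avg (PiE J V) (cube_product {e\<in>H. j \<notin> e} (subcube S) \<nu>)
    * \<bar>pair_avg (PiE J V) (doubled_product H (insert j S) f \<nu>)\<bar>"
proof -
  note step = pair_avg_doubled_product_insert_le[OF j(1,2) f_le]
  have "a ^ 2 ^ card (insert j S) = (a ^ 2 ^ card S)\<^sup>2"
    using j by (simp add: power_mult[symmetric] mult.commute)
  also have "\<dots> \<le> (c * \<bar>pair_avg (PiE J V) (doubled_product H S f \<nu>)\<bar>)\<^sup>2"
    using a by (intro power_mono) auto
  also have "\<dots> = c\<^sup>2 * (pair_avg (PiE J V) (doubled_product H S f \<nu>))\<^sup>2"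
    by (simp add: power_mult_distrib)
  also have "\<dots> \<le> c\<^sup>2 * (pair_avg (PiE J V) (cube_product {e\<in>H. j \<notin> e} (subcube S) \<nu>)
      * pair_avg (PiE J V) (doubled_product H (insert j S) f \<nu>))"
    using step(1) by (intro mult_left_mono) auto
  finally show ?thesis
    using step(2) by (simp add: mult.assoc)
qed

end

text \<open>The average is nonnegative because it is produced by the last doubling step.\<close>
lemma (in finite_grid) pair_avg_cube_nonneg:
  assumes e: "e \<subseteq> J" "e \<noteq> {}"
  shows "0 \<le> pair_avg (PiE J V) (\<lambda>x0 x1. \<Prod>\<omega>\<in>cube e. g (cpt e \<omega> x0 x1))"
proof -
  interpret grid_hypergraph J V "{e}"
    using e(1) by unfold_locales auto
  obtain j where j: "j \<in> e" using e(2) by blast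
  have "0 \<le> pair_avg (PiE J V) (doubled_product {e} (insert j (e - {j})) (\<lambda>_. g) (\<lambda>_ y. \<bar>g y\<bar>))"
    using e(1) j by (intro pair_avg_doubled_product_insert_le(2)) (auto simp: dominated_def)
  moreover have "doubled_product {e} (insert j (e - {j})) (\<lambda>_. g) (\<lambda>_ y. \<bar>g y\<bar>)
      = (\<lambda>x0 x1. \<Prod>\<omega>\<in>cube e. g (cpt e \<omega> x0 x1))"
    using j by (simp add: insert_absorb doubled_product_def cube_product_def fun_eq_iff)
  ultimately show ?thesis by simp
qed

lemma (in finite_grid) cube_norm_nonneg:
  assumes "e \<subseteq> J" "e \<noteq> {}"
  shows "0 \<le> cube_norm V e g"
proof -
  interpret edge_grid: finite_grid e V
    using assms(1) finite_J finite_V V_nonempty by unfold_locales (auto intro: finite_subset)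
  show ?thesis
    using edge_grid.pair_avg_cube_nonneg[OF order_refl assms(2), of g]
    by (simp add: cube_norm_def pair_avg_def Vprod_def)
qed

context grid_hypergraph
begin

lemma pair_avg_edge_cube_nonneg:
  "e0 \<in> H \<Longrightarrow> e0 \<noteq> {} \<Longrightarrow> 0 \<le> pair_avg (PiE J V) (cube_product H (edge_cube e0) f)"
  using pair_avg_cube_nonneg edge_subset finite_H by (simp add: cube_product_edge_cube)

lemma cube_norm_eq_root_pair_avg:
  assumes "e0 \<in> H"
  shows "cube_norm V e0 (f e0) = root (2 ^ card e0) (pair_avg (PiE J V) (cube_product H (edge_cube e0) f))"
proof -
  have eq: "cube_product H (edge_cube e0) f
      = (\<lambda>x0 x1. (\<lambda>a b. \<Prod>\<omega>\<in>cube e0. f e0 (cpt e0 \<omega> a b)) (restrict x0 e0) (restrict x1 e0))"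
    using assms finite_H by (simp add: cube_product_edge_cube cpt_restrict fun_eq_iff)
  have "pair_avg (PiE J V) (cube_product H (edge_cube e0) f)
      = pair_avg (PiE e0 V) (\<lambda>a b. \<Prod>\<omega>\<in>cube e0. f e0 (cpt e0 \<omega> a b))"
    unfolding eq using assms edge_subset
    by (intro pair_avg_PiE_restrict[of e0 "\<lambda>a b. \<Prod>\<omega>\<in>cube e0. f e0 (cpt e0 \<omega> a b)"]) auto
  then show ?thesis
    by (simp add: cube_norm_def pair_avg_def Vprod_def)
qed

lemma doubled_product_edge:
  assumes e0: "e0 \<in> H" and uniform: "\<And>e. e \<in> H \<Longrightarrow> card e = card e0"
  shows "doubled_product H e0 f \<nu> x0 x1
    = cube_product H (edge_cube e0) f x0 x1 * cube_product H (other_subcubes e0) \<nu> x0 x1"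
  unfolding doubled_product_def cube_product_def prod.distrib[symmetric]
proof (rule prod.cong[OF refl])
  fix e assume e: "e \<in> H"
  have "\<not> e0 \<subseteq> e" if "e \<noteq> e0"
    using card_subset_eq[OF finite_edge[OF e]] uniform[OF e] that by metis
  then show "(\<Prod>\<omega>\<in>subcube e0 e. (if e0 \<subseteq> e then f e else \<nu> e) (cpt e \<omega> x0 x1))
      = (\<Prod>\<omega>\<in>edge_cube e0 e. f e (cpt e \<omega> x0 x1)) * (\<Prod>\<omega>\<in>other_subcubes e0 e. \<nu> e (cpt e \<omega> x0 x1))"
    by (cases "e = e0") (simp_all add: edge_cube_def other_subcubes_def)
qed

text \<open>The final Cauchy--Schwarz step, in the coordinates outside \<open>e\<^sub>0\<close>: it trades the weight \<open>W\<close>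
  of the other edges for the defect average \<open>D\<close>.\<close>
lemma pair_avg_doubled_product_edge_le:
  assumes e0: "e0 \<in> H" and uniform: "\<And>e. e \<in> H \<Longrightarrow> card e = card e0" and f_le: "dominated V H \<nu> f"
  defines "P \<equiv> cube_product H (edge_cube e0) \<nu>" and "W \<equiv> cube_product H (other_subcubes e0) \<nu>"
  defines "D \<equiv> pair_avg (PiE J V) (\<lambda>x0 x1. P x0 x1 * (W x0 x1 - 1) * (W (override_on x0 x1 (J - e0)) x1 - 1))"
  shows "(pair_avg (PiE J V) (doubled_product H e0 f \<nu>) - pair_avg (PiE J V) (cube_product H (edge_cube e0) f))\<^sup>2
      \<le> pair_avg (PiE J V) P * D"
    and "0 \<le> D"
proof -
  define A where "A = cube_product H (edge_cube e0) f"
  define B where "B x0 x1 = W x0 x1 - 1" for x0 x1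
  have "doubled_product H e0 f \<nu> x0 x1 - A x0 x1 = A x0 x1 * B x0 x1" for x0 x1
    using doubled_product_edge[OF e0 uniform] by (simp add: A_def B_def W_def right_diff_distrib)
  then have AB: "pair_avg (PiE J V) (\<lambda>x0 x1. A x0 x1 * B x0 x1)
      = pair_avg (PiE J V) (doubled_product H e0 f \<nu>) - pair_avg (PiE J V) A"
    by (simp add: pair_avg_diff[symmetric])
  have D: "D = pair_avg (PiE J V) (\<lambda>x0 x1. P x0 x1 * B x0 x1 * B (override_on x0 x1 (J - e0)) x1)"
    by (simp add: D_def B_def)
  have A_inv: "A (override_on x0 z (J - e0)) x1 = A x0 x1" for x0 x1 z
    unfolding A_def by (rule cube_product_override_on_left) (auto simp: edge_cube_def split: if_splits)
  have P_inv: "P (override_on x0 z (J - e0)) x1 = P x0 x1 \<and> P x0 (override_on x1 z (J - e0)) = P x0 x1"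
    for x0 x1 z
    unfolding P_def by (intro conjI cube_product_override_on_left cube_product_override_on_right)
      (auto simp: edge_cube_def split: if_splits)
  have B_inv: "B x0 (override_on x1 z (J - e0)) = B x0 x1" for x0 x1 z
    unfolding B_def W_def
    by (subst cube_product_override_on_right) (auto simp: other_subcubes_def subcube_def split: if_splits)
  have A_le_P: "\<bar>A x0 x1\<bar> \<le> P x0 x1" if "x0 \<in> PiE J V" "x1 \<in> PiE J V" for x0 x1
    unfolding A_def P_def using that edge_subset f_le by (intro cube_product_abs_le) auto
  show "(pair_avg (PiE J V) (doubled_product H e0 f \<nu>) - pair_avg (PiE J V) (cube_product H (edge_cube e0) f))\<^sup>2
      \<le> pair_avg (PiE J V) P * D" and "0 \<le> D"
    using Cauchy_Schwarz_override_on[of "J - e0" A P B] unfolding AB[symmetric] D A_def[symmetric]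
    by (auto simp: A_inv P_inv B_inv A_le_P)
qed

end

section \<open>Pseudorandom systems of measures\<close>

definition product_avg :: "'j set \<Rightarrow> ('j \<Rightarrow> 'v set) \<Rightarrow> 'j set set \<Rightarrow> ('j set \<Rightarrow> ('j \<Rightarrow> 'v) \<Rightarrow> real) \<Rightarrow> real" where
  "product_avg J V H f = avg (PiE J V) (\<lambda>x. \<Prod>e\<in>H. f e (proj e x))"

lemma hypergraph_system_grid_hypergraph: "hypergraph_system J V d H \<Longrightarrow> grid_hypergraph J (V N) H"
  unfolding hypergraph_system_def by unfold_locales auto

lemma hypergraph_system_finite_grid: "hypergraph_system J V d H \<Longrightarrow> finite_grid J (V N)"
  by (rule grid_hypergraph.axioms(1)[OF hypergraph_system_grid_hypergraph])

lemma hypergraph_system_card_edge: "hypergraph_system J V d H \<Longrightarrow> e \<in> H \<Longrightarrow> card e = d"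
  unfolding hypergraph_system_def by auto

lemma hypergraph_system_edge_nonempty: "hypergraph_system J V d H \<Longrightarrow> e \<in> H \<Longrightarrow> e \<noteq> {}"
  unfolding hypergraph_system_def by auto

lemma hypergraph_system_edge_eq_of_subset:
  assumes hs: "hypergraph_system J V d H" and "e \<in> H" "e0 \<in> H" "e \<subseteq> e0"
  shows "e = e0"
proof -
  have "finite e0"
    using grid_hypergraph.finite_edge[OF hypergraph_system_grid_hypergraph[OF hs]] assms(3) .
  then show ?thesis
    using assms card_subset_eq hypergraph_system_card_edge[OF hs] by metis
qed

lemma hypergraph_system_cube_norm_nonneg:
  assumes hs: "hypergraph_system J V d H" and e: "e \<in> H"
  shows "0 \<le> cube_norm (V N) e g"
  using finite_grid.cube_norm_nonneg[OF hypergraph_system_finite_grid[OF hs]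
      grid_hypergraph.edge_subset[OF hypergraph_system_grid_hypergraph[OF hs] e]
      hypergraph_system_edge_nonempty[OF hs e]] .

lemma pseudorandom_nonneg: "pseudorandom J V H \<nu> \<Longrightarrow> e \<in> H \<Longrightarrow> y \<in> PiE e (V N) \<Longrightarrow> 0 \<le> \<nu> N e y"
  unfolding pseudorandom_def system_of_measures_def Vprod_def by blast

text \<open>Condition (ii), with the exponents \<open>n\<^sub>e\<^sub>,\<^sub>\<omega>\<close> the indicator function of \<open>K e\<close>.\<close>
lemma pseudorandom_cube_product_tendsto:
  assumes pr: "pseudorandom J V H \<nu>" and fin: "\<And>e. e \<in> H \<Longrightarrow> finite e"
    and K: "\<And>e. e \<in> H \<Longrightarrow> K e \<subseteq> cube e"
  shows "(\<lambda>N. pair_avg (PiE J (V N)) (cube_product H K (\<nu> N))) \<longlonglongrightarrow> 1"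
proof -
  define n where "n e \<omega> = (if \<omega> \<in> K e then 1 else 0 :: nat)" for e \<omega>
  have "(\<lambda>N. avg (Vprod (V N) J \<times> Vprod (V N) J)
      (\<lambda>(x0, x1). \<Prod>e\<in>H. \<Prod>\<omega>\<in>cube e. \<nu> N e (cpt e \<omega> x0 x1) ^ n e \<omega>)) \<longlonglongrightarrow> 1"
    using pr unfolding pseudorandom_def n_def by auto
  moreover have "(\<Prod>\<omega>\<in>cube e. \<nu> N e (cpt e \<omega> x0 x1) ^ n e \<omega>) = (\<Prod>\<omega>\<in>K e. \<nu> N e (cpt e \<omega> x0 x1))"
    if "e \<in> H" for e N x0 x1
  proof -
    have "(\<Prod>\<omega>\<in>cube e. \<nu> N e (cpt e \<omega> x0 x1) ^ n e \<omega>) = (\<Prod>\<omega>\<in>cube e \<inter> K e. \<nu> N e (cpt e \<omega> x0 x1))"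
      using finite_cube[OF fin[OF that]] by (simp add: n_def prod.inter_restrict if_distrib cong: if_cong)
    also have "cube e \<inter> K e = K e" using K that by auto
    finally show ?thesis .
  qed
  ultimately show ?thesis
    by (simp add: pair_avg_def Vprod_def cube_product_def cong: prod.cong)
qed

lemma pseudorandom_defect_tendsto:
  assumes pr: "pseudorandom J V H \<nu>" and fin: "\<And>e. e \<in> H \<Longrightarrow> finite e"
    and K: "\<And>e. e \<in> H \<Longrightarrow> K1 e \<union> K2 e \<union> K3 e \<subseteq> cube e"
    and disj: "\<And>e. e \<in> H \<Longrightarrow> K1 e \<inter> K2 e = {} \<and> K1 e \<inter> K3 e = {} \<and> K2 e \<inter> K3 e = {}"
  shows "(\<lambda>N. pair_avg (PiE J (V N)) (\<lambda>x0 x1. cube_product H K1 (\<nu> N) x0 x1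
      * (cube_product H K2 (\<nu> N) x0 x1 - 1) * (cube_product H K3 (\<nu> N) x0 x1 - 1))) \<longlonglongrightarrow> 0"
proof -
  have finite_K: "finite (K1 e) \<and> finite (K2 e) \<and> finite (K3 e)" if "e \<in> H" for e
    using K[OF that] finite_cube[OF fin[OF that]] by (auto intro: finite_subset)
  have expand: "cube_product H K1 g x0 x1 * (cube_product H K2 g x0 x1 - 1) * (cube_product H K3 g x0 x1 - 1)
      = cube_product H (\<lambda>e. K1 e \<union> K2 e \<union> K3 e) g x0 x1 - cube_product H (\<lambda>e. K1 e \<union> K2 e) g x0 x1
        - cube_product H (\<lambda>e. K1 e \<union> K3 e) g x0 x1 + cube_product H K1 g x0 x1" for g x0 x1
    using finite_K disj by (simp add: cube_product_union Int_Un_distrib2 algebra_simps)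
  have limit: "(\<lambda>N. pair_avg (PiE J (V N)) (cube_product H K (\<nu> N))) \<longlonglongrightarrow> 1"
    if "\<And>e. e \<in> H \<Longrightarrow> K e \<subseteq> K1 e \<union> K2 e \<union> K3 e" for K
  proof (rule pseudorandom_cube_product_tendsto[OF pr fin])
    fix e assume "e \<in> H"
    from that[OF this] K[OF this] show "K e \<subseteq> cube e" by (rule order_trans)
  qed
  have "(\<lambda>N. pair_avg (PiE J (V N)) (cube_product H (\<lambda>e. K1 e \<union> K2 e \<union> K3 e) (\<nu> N))
      - pair_avg (PiE J (V N)) (cube_product H (\<lambda>e. K1 e \<union> K2 e) (\<nu> N))
      - pair_avg (PiE J (V N)) (cube_product H (\<lambda>e. K1 e \<union> K3 e) (\<nu> N))
      + pair_avg (PiE J (V N)) (cube_product H K1 (\<nu> N))) \<longlonglongrightarrow> 1 - 1 - 1 + 1"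
    by (intro tendsto_intros limit) auto
  then show ?thesis
    by (simp add: expand pair_avg_add pair_avg_diff)
qed

lemma pseudorandom_product_avg_pow_le_doubled_product:
  assumes hs: "hypergraph_system J V d H" and pr: "pseudorandom J V H \<nu>" and S: "S \<subseteq> J"
  shows "\<exists>c. c \<longlonglongrightarrow> 1 \<and> (\<forall>N. 0 \<le> c N) \<and> (\<forall>N f. dominated (V N) H (\<nu> N) f \<longrightarrow>
    \<bar>product_avg J (V N) H f\<bar> ^ 2 ^ card S \<le> c N * \<bar>pair_avg (PiE J (V N)) (doubled_product H S f (\<nu> N))\<bar>)"
proof -
  note grid = hypergraph_system_grid_hypergraph[OF hs]
  note grid_fin = hypergraph_system_finite_grid[OF hs]
  have "finite S"
    using S finite_grid.finite_J[OF grid_fin] finite_subset by blast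
  then show ?thesis
    using S
  proof (induction S rule: finite_subset_induct)
    case empty
    have "pair_avg (PiE J (V N)) (doubled_product H {} f (\<nu> N)) = product_avg J (V N) H f" for N f
      using finite_grid.finite_PiE_subset[OF grid_fin order_refl] finite_grid.card_PiE_subset_pos[OF grid_fin order_refl]
      by (simp add: doubled_product_empty pair_avg_left card_gt_0_iff product_avg_def)
    then show ?case
      by (intro exI[of _ "\<lambda>_. 1"]) simp
  next
    case (insert j S)
    then obtain c where c: "c \<longlonglongrightarrow> 1" "\<forall>N. 0 \<le> c N"
      and bound: "\<And>N f. dominated (V N) H (\<nu> N) f \<Longrightarrow>
        \<bar>product_avg J (V N) H f\<bar> ^ 2 ^ card S \<le> c N * \<bar>pair_avg (PiE J (V N)) (doubled_product H S f (\<nu> N))\<bar>"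
      by blast
    define w where "w N = pair_avg (PiE J (V N)) (cube_product {e\<in>H. j \<notin> e} (subcube S) (\<nu> N))" for N
    have "w \<longlonglongrightarrow> 1"
      unfolding w_def cube_product_filter_edges[OF grid_hypergraph.finite_H[OF grid]]
      using grid_hypergraph.finite_edge[OF grid] subcube_subset_cube
      by (intro pseudorandom_cube_product_tendsto[OF pr]) auto
    moreover have w_nonneg: "0 \<le> w N" for N
      unfolding w_def using grid_hypergraph.edge_subset[OF grid] pseudorandom_nonneg[OF pr]
      by (intro pair_avg_nonneg cube_product_nonneg) auto
    ultimately have "(\<lambda>N. (c N)\<^sup>2 * w N) \<longlonglongrightarrow> 1"
      using tendsto_mult[OF tendsto_power[OF c(1), of 2]] by fastforce
    moreover have "\<bar>product_avg J (V N) H f\<bar> ^ 2 ^ card (insert j S)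
        \<le> (c N)\<^sup>2 * w N * \<bar>pair_avg (PiE J (V N)) (doubled_product H (insert j S) f (\<nu> N))\<bar>"
      if "dominated (V N) H (\<nu> N) f" for N f
      unfolding w_def using insert(1-3) that bound[OF that]
      by (intro grid_hypergraph.pow_le_doubled_product_insert[OF grid]) auto
    ultimately show ?case
      using c(2) w_nonneg by (intro exI[of _ "\<lambda>N. (c N)\<^sup>2 * w N"]) auto
  qed
qed

text \<open>The weight of the other edges, evaluated at \<open>x\<^sup>(\<^sup>0\<^sup>)\<close> with its coordinates outside \<open>e\<^sub>0\<close> taken
  from \<open>x\<^sup>(\<^sup>1\<^sup>)\<close>, is again a product over subcubes, namely the ones raised on \<open>J - e\<^sub>0\<close>.  These are
  disjoint from the unraised ones because every other edge meets \<open>J - e\<^sub>0\<close>, so condition (ii)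
  covers each term of the expanded defect.\<close>
lemma pseudorandom_edge_defect_tendsto:
  assumes hs: "hypergraph_system J V d H" and pr: "pseudorandom J V H \<nu>" and e0: "e0 \<in> H"
  shows "(\<lambda>N. pair_avg (PiE J (V N)) (\<lambda>x0 x1. cube_product H (edge_cube e0) (\<nu> N) x0 x1
      * (cube_product H (other_subcubes e0) (\<nu> N) x0 x1 - 1)
      * (cube_product H (other_subcubes e0) (\<nu> N) (override_on x0 x1 (J - e0)) x1 - 1))) \<longlonglongrightarrow> 0"
proof -
  note grid = hypergraph_system_grid_hypergraph[OF hs]
  define T where "T = J - e0"
  define K where "K e = raise_coords T e ` other_subcubes e0 e" for e
  have "inj_on (raise_coords T e) (other_subcubes e0 e)" for e
    using inj_on_raise_coords[of T e0 e] by (auto simp: T_def other_subcubes_def)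
  then have raised: "cube_product H (other_subcubes e0) g (override_on x0 x1 T) x1 = cube_product H K g x0 x1"
    for g :: "'a set \<Rightarrow> ('a \<Rightarrow> 'b) \<Rightarrow> real" and x0 x1
    unfolding K_def by (intro cube_product_raise_coords[symmetric])
  have disjoint: "other_subcubes e0 e \<inter> K e = {}" if e: "e \<in> H" for e
  proof (cases "e = e0")
    case False
    then obtain i where "i \<in> e" "i \<notin> e0"
      using hypergraph_system_edge_eq_of_subset[OF hs e e0] by blast
    moreover have "e \<subseteq> J" using grid_hypergraph.edge_subset[OF grid e] .
    ultimately show ?thesis
      using False subcube_disjoint_raise_coords[of i e T e0] by (auto simp: K_def T_def other_subcubes_def)
  qed (simp add: other_subcubes_def)
  have "K e \<subseteq> cube e" for e
    unfolding K_def using raise_coords_in_cube by blast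
  then show ?thesis
    unfolding T_def[symmetric] raised using grid_hypergraph.finite_edge[OF grid] disjoint
    by (intro pseudorandom_defect_tendsto[OF pr])
      (auto simp: edge_cube_def other_subcubes_def K_def dest: subcube_subset_cube[THEN subsetD])
qed

lemma pseudorandom_doubled_product_edge_approx:
  assumes hs: "hypergraph_system J V d H" and pr: "pseudorandom J V H \<nu>" and e0: "e0 \<in> H"
  shows "\<exists>\<delta>. \<delta> \<longlonglongrightarrow> 0 \<and> (\<forall>N. 0 \<le> \<delta> N) \<and> (\<forall>N f. dominated (V N) H (\<nu> N) f \<longrightarrow>
    \<bar>pair_avg (PiE J (V N)) (doubled_product H e0 f (\<nu> N))
      - pair_avg (PiE J (V N)) (cube_product H (edge_cube e0) f)\<bar> \<le> \<delta> N)"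
proof -
  note grid = hypergraph_system_grid_hypergraph[OF hs]
  have uniform: "\<And>e. e \<in> H \<Longrightarrow> card e = card e0"
    using hypergraph_system_card_edge[OF hs] e0 by auto
  define p where "p N = pair_avg (PiE J (V N)) (cube_product H (edge_cube e0) (\<nu> N))" for N
  define D where "D N = pair_avg (PiE J (V N)) (\<lambda>x0 x1. cube_product H (edge_cube e0) (\<nu> N) x0 x1
      * (cube_product H (other_subcubes e0) (\<nu> N) x0 x1 - 1)
      * (cube_product H (other_subcubes e0) (\<nu> N) (override_on x0 x1 (J - e0)) x1 - 1))" for N
  have "p \<longlonglongrightarrow> 1"
    unfolding p_def using grid_hypergraph.finite_edge[OF grid]
    by (intro pseudorandom_cube_product_tendsto[OF pr]) (auto simp: edge_cube_def)
  moreover have "D \<longlonglongrightarrow> 0"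
    unfolding D_def by (rule pseudorandom_edge_defect_tendsto[OF hs pr e0])
  ultimately have "(\<lambda>N. sqrt (p N * D N)) \<longlonglongrightarrow> sqrt (1 * 0)"
    by (intro tendsto_intros)
  moreover have "0 \<le> p N * D N" for N
  proof -
    have \<nu>_dominated: "dominated (V N) H (\<nu> N) (\<nu> N)"
      using pseudorandom_nonneg[OF pr] by (fastforce simp: dominated_def)
    have "0 \<le> D N"
      unfolding D_def by (rule grid_hypergraph.pair_avg_doubled_product_edge_le(2)[OF grid e0 uniform \<nu>_dominated])
    moreover have "0 \<le> p N"
      unfolding p_def using grid_hypergraph.edge_subset[OF grid] pseudorandom_nonneg[OF pr]
      by (intro pair_avg_nonneg cube_product_nonneg) auto
    ultimately show ?thesis by simp
  qed
  moreover have "\<bar>pair_avg (PiE J (V N)) (doubled_product H e0 f (\<nu> N))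
      - pair_avg (PiE J (V N)) (cube_product H (edge_cube e0) f)\<bar> \<le> sqrt (p N * D N)"
    if "dominated (V N) H (\<nu> N) f" for N f
    unfolding p_def D_def using that
    by (subst real_sqrt_abs[symmetric], intro real_sqrt_le_mono
        grid_hypergraph.pair_avg_doubled_product_edge_le(1)[OF grid e0 uniform])
  ultimately show ?thesis
    by (intro exI[of _ "\<lambda>N. sqrt (p N * D N)"]) auto
qed

lemma pseudorandom_product_avg_pow_le_edge_cube:
  assumes hs: "hypergraph_system J V d H" and pr: "pseudorandom J V H \<nu>" and e0: "e0 \<in> H"
  shows "\<exists>c \<delta>. c \<longlonglongrightarrow> 1 \<and> (\<forall>N. 0 \<le> c N) \<and> \<delta> \<longlonglongrightarrow> 0 \<and> (\<forall>N. 0 \<le> \<delta> N) \<and>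
    (\<forall>N f. dominated (V N) H (\<nu> N) f \<longrightarrow> \<bar>product_avg J (V N) H f\<bar> ^ 2 ^ card e0
      \<le> c N * (pair_avg (PiE J (V N)) (cube_product H (edge_cube e0) f) + \<delta> N))"
proof -
  note grid = hypergraph_system_grid_hypergraph[OF hs]
  obtain c where c: "c \<longlonglongrightarrow> 1" "\<forall>N. 0 \<le> c N"
    and doubling: "\<And>N f. dominated (V N) H (\<nu> N) f \<Longrightarrow> \<bar>product_avg J (V N) H f\<bar> ^ 2 ^ card e0
      \<le> c N * \<bar>pair_avg (PiE J (V N)) (doubled_product H e0 f (\<nu> N))\<bar>"
    using pseudorandom_product_avg_pow_le_doubled_product[OF hs pr grid_hypergraph.edge_subset[OF grid e0]]
    by blast
  obtain \<delta> where \<delta>: "\<delta> \<longlonglongrightarrow> 0" "\<forall>N. 0 \<le> \<delta> N"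
    and approx: "\<And>N f. dominated (V N) H (\<nu> N) f \<Longrightarrow>
      \<bar>pair_avg (PiE J (V N)) (doubled_product H e0 f (\<nu> N))
        - pair_avg (PiE J (V N)) (cube_product H (edge_cube e0) f)\<bar> \<le> \<delta> N"
    using pseudorandom_doubled_product_edge_approx[OF hs pr e0] by blast
  have "\<bar>pair_avg (PiE J (V N)) (doubled_product H e0 f (\<nu> N))\<bar>
      \<le> pair_avg (PiE J (V N)) (cube_product H (edge_cube e0) f) + \<delta> N"
    if "dominated (V N) H (\<nu> N) f" for N f
    using approx[OF that]
      grid_hypergraph.pair_avg_edge_cube_nonneg[OF grid e0 hypergraph_system_edge_nonempty[OF hs e0], of N f]
    by (auto simp: abs_le_iff abs_diff_le_iff)
  then have "\<bar>product_avg J (V N) H f\<bar> ^ 2 ^ card e0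
      \<le> c N * (pair_avg (PiE J (V N)) (cube_product H (edge_cube e0) f) + \<delta> N)"
    if "dominated (V N) H (\<nu> N) f" for N f
    using doubling[OF that] c(2) that by (meson mult_left_mono order_trans)
  then show ?thesis
    using c \<delta> by blast
qed

lemma add_power_le_power_add:
  fixes x y :: real
  assumes "0 \<le> x" "0 \<le> y" "0 < k"
  shows "x ^ k + y ^ k \<le> (x + y) ^ k"
proof -
  obtain m where k: "k = Suc m" using assms(3) by (cases k) auto
  have "x * x ^ m + y * y ^ m \<le> x * (x + y) ^ m + y * (x + y) ^ m"
    using assms by (intro add_mono mult_left_mono power_mono) auto
  then show ?thesis
    unfolding k by (simp add: algebra_simps)
qed

lemma real_root_add_le:
  assumes "0 < k" "0 \<le> a" "0 \<le> b"
  shows "root k (a + b) \<le> root k a + root k b"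
proof -
  have "a + b \<le> (root k a + root k b) ^ k"
    using add_power_le_power_add[of "root k a" "root k b" k] assms by simp
  then have "root k (a + b) \<le> root k ((root k a + root k b) ^ k)"
    by (rule real_root_le_mono[OF assms(1)])
  also have "\<dots> = root k a + root k b"
    using assms by (intro real_root_power_cancel) auto
  finally show ?thesis .
qed

lemma le_root_mult_of_power_le:
  assumes "0 < k" "0 \<le> a" "0 \<le> c" "0 \<le> \<Phi>" "0 \<le> \<delta>" and "a ^ k \<le> c * (\<Phi> + \<delta>)"
  shows "a \<le> root k c * (root k \<Phi> + root k \<delta>)"
proof -
  have "a = root k (a ^ k)"
    using assms by (simp add: real_root_power_cancel)
  also have "\<dots> \<le> root k (c * (\<Phi> + \<delta>))"
    using assms by (intro real_root_le_mono)
  also have "\<dots> = root k c * root k (\<Phi> + \<delta>)"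
    by (rule real_root_mult)
  also have "\<dots> \<le> root k c * (root k \<Phi> + root k \<delta>)"
    using assms by (intro mult_left_mono real_root_add_le) auto
  finally show ?thesis .
qed

lemma pseudorandom_product_avg_le_cube_norm:
  assumes hs: "hypergraph_system J V d H" and pr: "pseudorandom J V H \<nu>" and e0: "e0 \<in> H"
  shows "\<exists>C>0. \<exists>\<epsilon>. \<epsilon> \<longlonglongrightarrow> 0 \<and> (\<forall>N. 0 \<le> \<epsilon> N) \<and> (\<forall>N f. dominated (V N) H (\<nu> N) f \<longrightarrow>
    \<bar>product_avg J (V N) H f\<bar> \<le> C * cube_norm (V N) e0 (f e0) + \<epsilon> N)"
proof -
  note grid = hypergraph_system_grid_hypergraph[OF hs]
  define k where "k = (2::nat) ^ card e0"
  obtain c \<delta> where c: "c \<longlonglongrightarrow> 1" "\<forall>N. 0 \<le> c N" and \<delta>: "\<delta> \<longlonglongrightarrow> 0" "\<forall>N. 0 \<le> \<delta> N"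
    and bound: "\<And>N f. dominated (V N) H (\<nu> N) f \<Longrightarrow> \<bar>product_avg J (V N) H f\<bar> ^ k
      \<le> c N * (pair_avg (PiE J (V N)) (cube_product H (edge_cube e0) f) + \<delta> N)"
    using pseudorandom_product_avg_pow_le_edge_cube[OF hs pr e0] unfolding k_def by blast
  have "(\<lambda>N. root k (c N)) \<longlonglongrightarrow> root k 1"
    by (intro tendsto_intros c(1))
  then obtain C where C: "0 < C" "\<And>N. \<bar>root k (c N)\<bar> \<le> C"
    by (metis BseqE convergentI convergent_imp_Bseq real_norm_def)
  have "(\<lambda>N. C * root k (\<delta> N)) \<longlonglongrightarrow> C * root k 0"
    by (intro tendsto_intros \<delta>(1))
  moreover have "\<bar>product_avg J (V N) H f\<bar> \<le> C * cube_norm (V N) e0 (f e0) + C * root k (\<delta> N)"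
    if f_le: "dominated (V N) H (\<nu> N) f" for N f
  proof -
    let ?\<Phi> = "pair_avg (PiE J (V N)) (cube_product H (edge_cube e0) f)"
    have \<Phi>: "0 \<le> ?\<Phi>"
      using grid_hypergraph.pair_avg_edge_cube_nonneg[OF grid e0 hypergraph_system_edge_nonempty[OF hs e0]] .
    have "\<bar>product_avg J (V N) H f\<bar> \<le> root k (c N) * (root k ?\<Phi> + root k (\<delta> N))"
      using bound[OF f_le] c(2) \<Phi> \<delta>(2) by (intro le_root_mult_of_power_le) (auto simp: k_def)
    also have "\<dots> \<le> C * (root k ?\<Phi> + root k (\<delta> N))"
      using C(2)[of N] \<Phi> \<delta>(2)
      by (intro mult_right_mono add_nonneg_nonneg real_root_ge_zero) (auto dest: abs_le_D1)
    finally show ?thesis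
      by (simp add: grid_hypergraph.cube_norm_eq_root_pair_avg[OF grid e0] k_def distrib_left)
  qed
  moreover have "0 \<le> C * root k (\<delta> N)" for N
    using C(1) \<delta>(2) by (intro mult_nonneg_nonneg real_root_ge_zero) auto
  ultimately show ?thesis
    using C(1) by (intro exI[of _ C] conjI exI[of _ "\<lambda>N. C * root k (\<delta> N)"]) auto
qed

lemma uniform_bound_of_finite_bounds:
  fixes F :: "nat \<Rightarrow> 'a \<Rightarrow> real" and G :: "'e \<Rightarrow> nat \<Rightarrow> 'a \<Rightarrow> real"
  assumes E: "finite E"
    and bounds: "\<And>e. e \<in> E \<Longrightarrow> \<exists>C>0. \<exists>\<epsilon>. \<epsilon> \<longlonglongrightarrow> 0 \<and> (\<forall>N. 0 \<le> \<epsilon> N) \<and>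
      (\<forall>N x. P N x \<longrightarrow> F N x \<le> C * G e N x + \<epsilon> N)"
    and G_nonneg: "\<And>e N x. e \<in> E \<Longrightarrow> 0 \<le> G e N x"
  shows "\<exists>C>0. \<exists>\<epsilon>. \<epsilon> \<longlonglongrightarrow> 0 \<and> (\<forall>N x. P N x \<longrightarrow> (\<forall>e\<in>E. F N x \<le> C * G e N x + \<epsilon> N))"
proof -
  define bounded where "bounded e C \<epsilon> \<longleftrightarrow> 0 < C \<and> \<epsilon> \<longlonglongrightarrow> 0 \<and> (\<forall>N. 0 \<le> \<epsilon> N) \<and>
    (\<forall>N x. P N x \<longrightarrow> F N x \<le> C * G e N x + \<epsilon> N)" for e C and \<epsilon> :: "nat \<Rightarrow> real"
  have "\<forall>e\<in>E. \<exists>C \<epsilon>. bounded e C \<epsilon>"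
    using bounds unfolding bounded_def by blast
  then obtain C where "\<forall>e\<in>E. \<exists>\<epsilon>. bounded e (C e) \<epsilon>"
    by (rule bchoice[elim_format]) blast
  then obtain \<epsilon> where "\<forall>e\<in>E. bounded e (C e) (\<epsilon> e)"
    by (rule bchoice[elim_format]) blast
  then have C: "\<And>e. e \<in> E \<Longrightarrow> 0 < C e" and \<epsilon>: "\<And>e. e \<in> E \<Longrightarrow> \<epsilon> e \<longlonglongrightarrow> 0 \<and> (\<forall>N. 0 \<le> \<epsilon> e N)"
    and F: "\<And>e N x. e \<in> E \<Longrightarrow> P N x \<Longrightarrow> F N x \<le> C e * G e N x + \<epsilon> e N"
    unfolding bounded_def by blast+
  define C0 where "C0 = 1 + (\<Sum>e\<in>E. C e)"
  define \<epsilon>0 where "\<epsilon>0 N = (\<Sum>e\<in>E. \<epsilon> e N)" for N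
  have "C e * G e N x + \<epsilon> e N \<le> C0 * G e N x + \<epsilon>0 N" if "e \<in> E" for e N x
  proof (intro add_mono mult_right_mono)
    have "C e \<le> (\<Sum>e\<in>E. C e)" "\<epsilon> e N \<le> \<epsilon>0 N"
      unfolding \<epsilon>0_def using that E C \<epsilon> by (auto intro!: member_le_sum intro: less_imp_le)
    then show "C e \<le> C0" "\<epsilon> e N \<le> \<epsilon>0 N"
      unfolding C0_def by simp_all
  qed (use that G_nonneg in auto)
  then have "\<forall>N x. P N x \<longrightarrow> (\<forall>e\<in>E. F N x \<le> C0 * G e N x + \<epsilon>0 N)"
    using F order_trans by blast
  moreover have "\<epsilon>0 \<longlonglongrightarrow> 0"
    unfolding \<epsilon>0_def using \<epsilon> by (intro tendsto_null_sum) auto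
  moreover have "0 < C0"
    unfolding C0_def using C by (simp add: add_pos_nonneg less_imp_le sum_nonneg)
  ultimately show ?thesis
    by blast
qed

theorem mainTheorem8:
  fixes J :: "'j set" and V :: "nat \<Rightarrow> 'j \<Rightarrow> 'v set" and d :: nat and H :: "'j set set"
    and \<nu> :: "nat \<Rightarrow> 'j set \<Rightarrow> ('j \<Rightarrow> 'v) \<Rightarrow> real"
  assumes "hypergraph_system J V d H"
    and "pseudorandom J V H \<nu>"
  shows "\<exists>C>0. \<exists>\<epsilon> :: nat \<Rightarrow> real. \<epsilon> \<longlonglongrightarrow> 0 \<and>
    (\<forall>N. \<forall>f :: 'j set \<Rightarrow> ('j \<Rightarrow> 'v) \<Rightarrow> real.
       (\<forall>e\<in>H. \<forall>x\<in>Vprod (V N) e. \<bar>f e x\<bar> \<le> \<nu> N e x) \<longrightarrow>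
       (\<forall>e\<in>H. \<bar>avg (Vprod (V N) J) (\<lambda>x. \<Prod>e'\<in>H. f e' (proj e' x))\<bar>
                \<le> C * cube_norm (V N) e (f e) + \<epsilon> N))"
  using uniform_bound_of_finite_bounds[where P="\<lambda>N f. dominated (V N) H (\<nu> N) f"
      and F="\<lambda>N f. \<bar>product_avg J (V N) H f\<bar>" and G="\<lambda>e N f. cube_norm (V N) e (f e)",
      OF grid_hypergraph.finite_H[OF hypergraph_system_grid_hypergraph[OF assms(1)]]
      pseudorandom_product_avg_le_cube_norm[OF assms] hypergraph_system_cube_norm_nonneg[OF assms(1)]]
  unfolding dominated_def product_avg_def Vprod_def .

end
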